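(* Let $X$ be a Banach space such that $B_{X^*}$ is weak$^*$ sequentially compact. If $X$ contains a $\mathfrak{D}$-point, or if $X^*$ contains a weak$^*$ $\Delta$-point, then $X^*$ contains a weak$^*$ sequential super $\Delta$-point.
   Context: For $x\in S_X$ let $D(x)=\{x^*\in S_{X^*}:x^*(x)=1\}$ and $S(x^*,\varepsilon)=\{y\in B_X:x^*(y)>1-\varepsilon\}$. A point $x\in S_X$ is a $\mathfrak{D}$-point if $\sup_{y\in S(x^*,\varepsilon)}\|x-y\|=2$ for every $x^*\in D(x)$ and $\varepsilon>0$. A point $x^*\in S_{X^*}$ is a weak$^*$ $\Delta$-point if $\sup_{y^*\in S}\|x^*-y^*\|=2$ for every weak$^*$ slice $S=\{y^*\in B_{X^*}:y^*(x)>1-\varepsilon\}$ ($x\in S_X$, $\varepsilon>0$) containing $x^*$. A point $x^*\in S_{X^*}$ is a weak$^*$ sequential super $\Delta$-point if there is a sequence $(x_n^* )$ in $S_{X^*}$ converging weak$^*$ to $x^*$ with $\|x^*-x_n^*\|\to2$. *)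

theory Defs
  imports "HOL-Analysis.Analysis"
begin

text \<open>The dual X* of a real Banach space X (type 'a::banach) is represented by the
  bounded linear functionals 'a \<Rightarrow> real, with the operator norm onorm.\<close>

definition dual_ball :: "('a::real_normed_vector \<Rightarrow> real) set" where
  "dual_ball = {f. bounded_linear f \<and> onorm f \<le> 1}"

definition dual_sphere :: "('a::real_normed_vector \<Rightarrow> real) set" where
  "dual_sphere = {f. bounded_linear f \<and> onorm f = 1}"

definition weak_star_tendsto ::
  "(nat \<Rightarrow> 'a::real_normed_vector \<Rightarrow> real) \<Rightarrow> ('a \<Rightarrow> real) \<Rightarrow> bool" where
  "weak_star_tendsto g f \<longleftrightarrow> (\<forall>x. (\<lambda>n. g n x) \<longlonglongrightarrow> f x)"

definition dual_ball_weak_star_seq_compact :: "'a::real_normed_vector itself \<Rightarrow> bool" where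
  "dual_ball_weak_star_seq_compact _ \<longleftrightarrow>
     (\<forall>g::nat \<Rightarrow> 'a \<Rightarrow> real. (\<forall>n. g n \<in> dual_ball) \<longrightarrow>
        (\<exists>r f. strict_mono r \<and> f \<in> dual_ball \<and> weak_star_tendsto (g \<circ> r) f))"

definition Dset :: "'a::real_normed_vector \<Rightarrow> ('a \<Rightarrow> real) set" where
  "Dset x = {f \<in> dual_sphere. f x = 1}"

definition slice :: "('a::real_normed_vector \<Rightarrow> real) \<Rightarrow> real \<Rightarrow> 'a set" where
  "slice f \<epsilon> = {y. norm y \<le> 1 \<and> f y > 1 - \<epsilon>}"

definition D_point :: "'a::real_normed_vector \<Rightarrow> bool" where
  "D_point x \<longleftrightarrow> norm x = 1 \<and>
     (\<forall>f \<in> Dset x. \<forall>\<epsilon>>0. (SUP y \<in> slice f \<epsilon>. norm (x - y)) = 2)"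

definition weak_star_slice :: "'a::real_normed_vector \<Rightarrow> real \<Rightarrow> ('a \<Rightarrow> real) set" where
  "weak_star_slice x \<epsilon> = {g \<in> dual_ball. g x > 1 - \<epsilon>}"

definition weak_star_Delta_point :: "('a::real_normed_vector \<Rightarrow> real) \<Rightarrow> bool" where
  "weak_star_Delta_point f \<longleftrightarrow> f \<in> dual_sphere \<and>
     (\<forall>x \<epsilon>. norm x = 1 \<and> \<epsilon> > 0 \<and> f \<in> weak_star_slice x \<epsilon> \<longrightarrow>
        (SUP g \<in> weak_star_slice x \<epsilon>. onorm (\<lambda>z. f z - g z)) = 2)"

definition weak_star_seq_super_Delta_point :: "('a::real_normed_vector \<Rightarrow> real) \<Rightarrow> bool" where
  "weak_star_seq_super_Delta_point f \<longleftrightarrow> f \<in> dual_sphere \<and>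
     (\<exists>g. (\<forall>n. g n \<in> dual_sphere) \<and> weak_star_tendsto g f \<and>
          (\<lambda>n. onorm (\<lambda>z. f z - g n z)) \<longlonglongrightarrow> 2)"

end

theory Submission
  imports Defs
begin

text \<open>
  If \<open>x\<close> is a \<open>\<D>\<close>-point, some functional is a weak* \<open>\<Delta>\<close>-point. Otherwise every
  \<open>f \<in> D(x)\<close> has a weak* neighbourhood whose members in the dual ball stay at distance
  \<open>\<le> 2 - \<eta>\<^sub>f\<close> from \<open>f\<close>; \<open>D(x)\<close> is weak* compact, so finitely many such neighbourhoods
  cover it, and even cover every \<open>g\<close> in the dual ball with \<open>g x > 1 - \<delta>\<close>. The \<open>\<D>\<close>-point
  property applied to the average \<open>\<phi>\<close> of their centres yields \<open>y\<close> in a thin slice of \<open>\<phi>\<close>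
  almost antipodal to \<open>x\<close>. A functional norming \<open>x - y\<close> is then nearly \<open>-1\<close> at \<open>y\<close>, yet
  lies in one of the neighbourhoods, whose centre is nearly \<open>1\<close> at \<open>y\<close>.

  From a weak* \<open>\<Delta>\<close>-point \<open>f\<close> one builds unit vectors \<open>z\<^sub>n\<close> and functionals \<open>g\<^sub>n\<close> in
  the dual ball with \<open>g\<^sub>n(z\<^sub>n) \<approx> -1\<close>, where \<open>g\<^sub>n\<close> lies in a thin weak* slice of \<open>f\<close>
  in the direction of the dyadic sum \<open>e + (\<Sum>j<n. 2\<^sup>j z\<^sub>j)\<close>. Almost norming that sum
  forces \<open>g\<^sub>n(z\<^sub>i) > 1 - 2 / 2\<^sup>i\<close> for \<open>i < n\<close>, so a weak* limit \<open>H\<close> of a subsequence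
  has norm 1 and \<open>H(z\<^sub>n) - g\<^sub>n(z\<^sub>n) \<longrightarrow> 2\<close>; normalising the \<open>g\<^sub>n\<close> gives the sequence.
\<close>

lemma dual_ball_iff: "g \<in> dual_ball \<longleftrightarrow> linear g \<and> (\<forall>z. \<bar>g z\<bar> \<le> norm z)"
proof
  assume g: "g \<in> dual_ball"
  then have "bounded_linear g" "onorm g \<le> 1" by (auto simp: dual_ball_def)
  moreover have "\<bar>g z\<bar> \<le> norm z" for z
    using onorm[OF \<open>bounded_linear g\<close>, of z] mult_right_mono[OF \<open>onorm g \<le> 1\<close> norm_ge_zero, of z]
    by simp
  ultimately show "linear g \<and> (\<forall>z. \<bar>g z\<bar> \<le> norm z)" by (simp add: bounded_linear.linear)
next
  assume g: "linear g \<and> (\<forall>z. \<bar>g z\<bar> \<le> norm z)"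
  have "bounded_linear g"
    by (rule bounded_linear_intro[of g 1]) (use g in \<open>simp_all add: linear_add linear_scale\<close>)
  moreover have "onorm g \<le> 1" by (rule onorm_bound) (use g in simp_all)
  ultimately show "g \<in> dual_ball" by (simp add: dual_ball_def)
qed

lemma dual_ball_abs_le: "g \<in> dual_ball \<Longrightarrow> \<bar>g z\<bar> \<le> norm z"
  by (simp add: dual_ball_iff)

lemma dual_sphere_subset_dual_ball: "dual_sphere \<subseteq> dual_ball"
  by (auto simp: dual_sphere_def dual_ball_def)

lemma real_le_onorm:
  fixes h :: "'a::real_normed_vector \<Rightarrow> real"
  assumes "bounded_linear h" "norm z \<le> 1"
  shows "h z \<le> onorm h"
proof -
  have "h z \<le> onorm h * norm z" using onorm[OF assms(1), of z] by simp
  also have "\<dots> \<le> onorm h" using assms onorm_pos_le[OF assms(1)] by (simp add: mult_left_le)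
  finally show ?thesis .
qed

lemma less_onormE:
  fixes h :: "'a::real_normed_vector \<Rightarrow> real"
  assumes "bounded_linear h" "c < onorm h"
  obtains z where "norm z \<le> 1" "c < h z"
proof (rule ccontr)
  assume "\<not> thesis"
  with that have le: "h z \<le> c" if "norm z \<le> 1" for z using that by fastforce
  interpret h: bounded_linear h by fact
  have "norm (h z) \<le> c * norm z" for z
  proof (cases "z = 0")
    case False
    have "\<bar>h (z /\<^sub>R norm z)\<bar> \<le> c"
      using le[of "z /\<^sub>R norm z"] le[of "- (z /\<^sub>R norm z)"] False by (simp add: h.neg)
    then show ?thesis using False by (simp add: h.scaleR abs_mult field_simps)
  qed simp
  then have "onorm h \<le> c" using le[of 0] by (intro onorm_bound) simp_all
  with assms(2) show False by simp
qed

lemma onorm_diff_dual_ball_le: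
  assumes "f \<in> dual_ball" "g \<in> dual_ball"
  shows "onorm (\<lambda>z. f z - g z) \<le> 2"
proof (rule onorm_bound)
  show "norm (f z - g z) \<le> 2 * norm z" for z
    using dual_ball_abs_le[OF assms(1), of z] dual_ball_abs_le[OF assms(2), of z] by simp
qed simp

lemma dual_ball_diff_le_onorm:
  assumes "f \<in> dual_ball" "g \<in> dual_ball" "norm z \<le> 1"
  shows "f z - g z \<le> onorm (\<lambda>x. f x - g x)"
  using assms by (intro real_le_onorm bounded_linear_sub) (auto simp: dual_ball_def)

lemma dual_ball_average:
  assumes F: "finite F" "F \<noteq> {}" "F \<subseteq> dual_ball"
  shows "(\<lambda>a. (\<Sum>f\<in>F. f a) / card F) \<in> dual_ball"
proof -
  have n: "0 < real (card F)" using F by (simp add: card_gt_0_iff)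
  have "linear f" if "f \<in> F" for f using F(3) that by (auto simp: dual_ball_iff)
  then have "linear (\<lambda>a. (\<Sum>f\<in>F. f a) / card F)"
    by (intro linearI) (auto simp: linear_add linear_scale sum.distrib add_divide_distrib
        sum_distrib_left intro!: sum.cong)
  moreover have "\<bar>(\<Sum>f\<in>F. f a) / card F\<bar> \<le> norm a" for a
  proof -
    have "\<bar>\<Sum>f\<in>F. f a\<bar> \<le> (\<Sum>f\<in>F. \<bar>f a\<bar>)" by (rule sum_abs)
    also have "\<dots> \<le> (\<Sum>f\<in>F. norm a)" using F(3) dual_ball_abs_le by (intro sum_mono) blast
    finally have "\<bar>\<Sum>f\<in>F. f a\<bar> \<le> card F * norm a" by simp
    then show ?thesis using n by (simp add: divide_le_eq mult.commute)
  qed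
  ultimately show ?thesis by (simp add: dual_ball_iff)
qed

lemma mean_gt_imp_each_gt:
  fixes a :: "'b \<Rightarrow> real" and \<delta> :: real
  assumes F: "finite F" "f \<in> F" and le1: "\<And>g. g \<in> F \<Longrightarrow> a g \<le> 1"
    and mean: "1 - \<delta> < (\<Sum>g\<in>F. a g) / card F"
  shows "1 - card F * \<delta> < a f"
proof -
  have n: "0 < real (card F)" using F card_gt_0_iff by fastforce
  have "(\<Sum>g\<in>F - {f}. a g) \<le> (\<Sum>g\<in>F - {f}. 1)" using le1 by (intro sum_mono) simp
  also have "\<dots> = real (card F) - 1" using F n by (simp add: Suc_leI)
  finally have "(\<Sum>g\<in>F - {f}. a g) \<le> real (card F) - 1" .
  moreover have "(\<Sum>g\<in>F. a g) = a f + (\<Sum>g\<in>F - {f}. a g)" by (rule sum.remove[OF F])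
  moreover have "card F * (1 - \<delta>) < (\<Sum>g\<in>F. a g)" using mean n by (simp add: field_simps)
  ultimately show ?thesis by (simp add: algebra_simps)
qed

section \<open>Hahn--Banach via norm-dominated graphs\<close>

lemma subspace_Union_chain:
  assumes "C \<noteq> {}" "\<And>X. X \<in> C \<Longrightarrow> subspace X" "subset.chain A C"
  shows "subspace (\<Union>C)"
proof (rule subspaceI)
  show "0 \<in> \<Union>C" using assms(1,2) subspace_0 by blast
  fix x y assume "x \<in> \<Union>C" "y \<in> \<Union>C"
  then obtain X Y where "X \<in> C" "Y \<in> C" "x \<in> X" "y \<in> Y" by blast
  moreover have "X \<subseteq> Y \<or> Y \<subseteq> X" using assms(3) \<open>X \<in> C\<close> \<open>Y \<in> C\<close>
    by (auto simp: subset.chain_def)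
  ultimately show "x + y \<in> \<Union>C" using assms(2) subspace_add by (metis UnionI subsetD)
next
  fix c x assume "x \<in> \<Union>C"
  then show "c *\<^sub>R x \<in> \<Union>C" using assms(2) subspace_scale by blast
qed

text \<open>Graphs of linear functionals on subspaces that contain \<open>(v, \<parallel>v\<parallel>)\<close> and are dominated by
  the norm; a maximal one is the graph of a functional norming \<open>v\<close> (Hahn--Banach).\<close>

definition norm_dominated_graphs :: "'a::real_normed_vector \<Rightarrow> ('a \<times> real) set set" where
  "norm_dominated_graphs v = {G. subspace G \<and> (v, norm v) \<in> G \<and> (\<forall>(a, b)\<in>G. b \<le> norm a)}"

lemma norm_dominated_graph_unique:
  assumes "G \<in> norm_dominated_graphs v" "(a, b) \<in> G" "(a, c) \<in> G"
  shows "b = c"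
proof -
  have G: "subspace G" "\<And>a b. (a, b) \<in> G \<Longrightarrow> b \<le> norm a"
    using assms(1) by (auto simp: norm_dominated_graphs_def)
  have "(0, b - c) \<in> G" using subspace_diff[OF G(1) assms(2,3)] by simp
  moreover have "(0, c - b) \<in> G" using subspace_diff[OF G(1) assms(3,2)] by simp
  ultimately show ?thesis using G(2)[of 0 "b - c"] G(2)[of 0 "c - b"] by simp
qed

lemma norm_dominated_graph_separating_constant:
  fixes v z :: "'a::real_normed_vector"
  assumes "G \<in> norm_dominated_graphs v"
  obtains c where "\<And>a b. (a, b) \<in> G \<Longrightarrow> b - norm (a - z) \<le> c"
    "\<And>a b. (a, b) \<in> G \<Longrightarrow> c \<le> norm (a + z) - b"
proof -
  have G: "subspace G" "\<And>a b. (a, b) \<in> G \<Longrightarrow> b \<le> norm a"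
    using assms by (auto simp: norm_dominated_graphs_def)
  have sep: "b - norm (a - z) \<le> norm (a' + z) - b'" if "(a, b) \<in> G" "(a', b') \<in> G" for a b a' b'
  proof -
    have "b + b' \<le> norm (a + a')"
      using G(2)[of "a + a'" "b + b'"] subspace_add[OF G(1) that] by simp
    also have "\<dots> \<le> norm (a - z) + norm (a' + z)"
      using norm_triangle_ineq[of "a - z" "a' + z"] by simp
    finally show ?thesis by simp
  qed
  define S where "S = {b - norm (a - z) | a b. (a, b) \<in> G}"
  have "(0, 0) \<in> G" using subspace_0[OF G(1)] by (simp add: zero_prod_def)
  then have S: "S \<noteq> {}" "bdd_above S"
    using sep unfolding S_def bdd_above_def by fastforce+
  show ?thesis
  proof (rule that[of "Sup S"])
    show "b - norm (a - z) \<le> Sup S" if "(a, b) \<in> G" for a b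
      using S that by (auto simp: S_def intro: cSup_upper)
    show "Sup S \<le> norm (a + z) - b" if "(a, b) \<in> G" for a b
      using S sep that by (auto simp: S_def intro!: cSup_least)
  qed
qed

lemma norm_dominated_graph_line_dominated:
  fixes v z :: "'a::real_normed_vector"
  assumes G: "G \<in> norm_dominated_graphs v" "(a, b) \<in> G"
    and lower: "\<And>a b. (a, b) \<in> G \<Longrightarrow> b - norm (a - z) \<le> c"
    and upper: "\<And>a b. (a, b) \<in> G \<Longrightarrow> c \<le> norm (a + z) - b"
  shows "b + t * c \<le> norm (a + t *\<^sub>R z)"
proof -
  have scaled: "(r *\<^sub>R a, r * b) \<in> G" for r
    using subspace_scale[of G "(a, b)" r] G by (simp add: norm_dominated_graphs_def)
  show ?thesis
  proof (cases t "0 :: real" rule: linorder_cases)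
    case less
    have "(-1/t) * b - norm ((-1/t) *\<^sub>R a - z) \<le> c" by (rule lower[OF scaled])
    then have "(-t) * ((-1/t) * b - norm ((-1/t) *\<^sub>R a - z)) \<le> (-t) * c"
      using less by (intro mult_left_mono) auto
    moreover have "(-t) *\<^sub>R ((-1/t) *\<^sub>R a - z) = a + t *\<^sub>R z" using less by (simp add: algebra_simps)
    then have "(-t) * norm ((-1/t) *\<^sub>R a - z) = norm (a + t *\<^sub>R z)"
      using less by (metis abs_of_pos neg_0_less_iff_less norm_scaleR)
    ultimately show ?thesis using less by (simp add: algebra_simps)
  next
    case equal
    then show ?thesis using G by (auto simp: norm_dominated_graphs_def)
  next
    case greater
    have "c \<le> norm ((1/t) *\<^sub>R a + z) - (1/t) * b" by (rule upper[OF scaled])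
    then have "t * c \<le> t * (norm ((1/t) *\<^sub>R a + z) - (1/t) * b)"
      using greater by (intro mult_left_mono) auto
    moreover have "t *\<^sub>R ((1/t) *\<^sub>R a + z) = a + t *\<^sub>R z" using greater by (simp add: algebra_simps)
    then have "t * norm ((1/t) *\<^sub>R a + z) = norm (a + t *\<^sub>R z)"
      using greater by (metis abs_of_pos norm_scaleR)
    ultimately show ?thesis using greater by (simp add: algebra_simps)
  qed
qed

lemma norm_dominated_graph_extend:
  fixes v z :: "'a::real_normed_vector"
  assumes G: "G \<in> norm_dominated_graphs v"
  shows "\<exists>G'\<in>norm_dominated_graphs v. G \<subseteq> G' \<and> (\<exists>c. (z, c) \<in> G')"
proof -
  obtain c where lower: "\<And>a b. (a, b) \<in> G \<Longrightarrow> b - norm (a - z) \<le> c"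
    and upper: "\<And>a b. (a, b) \<in> G \<Longrightarrow> c \<le> norm (a + z) - b"
    using norm_dominated_graph_separating_constant[OF G] by blast
  have sub: "subspace G" "(v, norm v) \<in> G" using G by (auto simp: norm_dominated_graphs_def)
  define G' where "G' = {p + q | p q. p \<in> G \<and> q \<in> span {(z, c)}}"
  have "G \<subseteq> G'"
    unfolding G'_def by (metis (mono_tags, lifting) add.right_neutral mem_Collect_eq span_zero subsetI)
  have "G' \<in> norm_dominated_graphs v"
    unfolding norm_dominated_graphs_def
  proof (intro CollectI conjI ballI)
    show "subspace G'" unfolding G'_def by (intro subspace_sums sub(1) subspace_span)
    show "(v, norm v) \<in> G'" using \<open>G \<subseteq> G'\<close> sub(2) by blast
    fix p assume "p \<in> G'"
    then obtain a b t where "(a, b) \<in> G" "p = (a + t *\<^sub>R z, b + t * c)"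
      unfolding G'_def span_singleton by auto
    then show "case p of (a, b) \<Rightarrow> b \<le> norm a"
      using norm_dominated_graph_line_dominated[OF G _ lower upper] by simp
  qed
  moreover have "(z, c) \<in> G'"
    unfolding G'_def using subspace_0[OF sub(1)] span_base[of "(z, c)" "{(z, c)}"]
    by (metis (mono_tags, lifting) add_0 mem_Collect_eq singletonI)
  ultimately show ?thesis using \<open>G \<subseteq> G'\<close> by blast
qed

lemma dual_ball_norming:
  fixes v :: "'a::real_normed_vector"
  shows "\<exists>f\<in>dual_ball. f v = norm v"
proof -
  have "\<forall>(a, b)\<in>span {(v, norm v)}. b \<le> norm a"
    by (auto simp: span_singleton intro: mult_right_mono)
  then have "span {(v, norm v)} \<in> norm_dominated_graphs v"
    by (simp add: norm_dominated_graphs_def span_base)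
  moreover have "\<Union>C \<in> norm_dominated_graphs v"
    if "C \<noteq> {}" "subset.chain (norm_dominated_graphs v) C" for C
    using that subspace_Union_chain[OF that(1) _ that(2)]
    unfolding norm_dominated_graphs_def subset.chain_def by blast
  ultimately obtain M where M: "M \<in> norm_dominated_graphs v"
    and max: "\<And>X. X \<in> norm_dominated_graphs v \<Longrightarrow> M \<subseteq> X \<Longrightarrow> X = M"
    using subset_Zorn_nonempty[of "norm_dominated_graphs v"] by blast
  have sub: "subspace M" and vM: "(v, norm v) \<in> M" and dom: "\<And>a b. (a, b) \<in> M \<Longrightarrow> b \<le> norm a"
    using M by (auto simp: norm_dominated_graphs_def)
  have "\<exists>!b. (z, b) \<in> M" for z
    using norm_dominated_graph_extend[OF M, of z] max norm_dominated_graph_unique[OF M] by blast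
  then obtain f where f: "\<And>z. (z, f z) \<in> M" by metis
  have f_eq: "f a = b" if "(a, b) \<in> M" for a b
    using norm_dominated_graph_unique[OF M f that] .
  have "linear f"
  proof
    show "f (a + c) = f a + f c" for a c using f_eq subspace_add[OF sub f f] by simp
    show "f (r *\<^sub>R a) = r *\<^sub>R f a" for r a using f_eq subspace_scale[OF sub f] by simp
  qed
  moreover have "\<bar>f z\<bar> \<le> norm z" for z
    using dom[OF f, of z] dom[OF f, of "-z"] linear_neg[OF \<open>linear f\<close>, of z] by simp
  ultimately show ?thesis using f_eq[OF vM] by (auto simp: dual_ball_iff)
qed

section \<open>Weak* compactness\<close>

text \<open>Banach--Alaoglu, for the topology of pointwise convergence on functionals.\<close>

lemma compact_dual_ball: "compact (dual_ball :: ('a::real_normed_vector \<Rightarrow> real) set)"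
proof -
  have box: "compact (PiE UNIV (\<lambda>a::'a. cball (0::real) (norm a)))"
    using compactin_PiE[of "\<lambda>_. euclidean" UNIV "\<lambda>a::'a. cball (0::real) (norm a)"]
    by (simp add: euclidean_product_topology)
  have linear: "closed {g :: 'a \<Rightarrow> real. linear g}"
    unfolding linear_iff
    by (intro closed_Collect_conj closed_Collect_all closed_Collect_eq continuous_intros
        continuous_on_product_coordinates)
  have "dual_ball = PiE UNIV (\<lambda>a::'a. cball (0::real) (norm a)) \<inter> {g. linear g}"
    by (auto simp: dual_ball_iff PiE_iff)
  then show ?thesis using compact_Int_closed[OF box linear] by simp
qed

lemma Dset_eq:
  assumes "norm x \<le> 1"
  shows "Dset x = {g \<in> dual_ball. g x = 1}"
proof (intro set_eqI iffI)
  fix g assume "g \<in> Dset x"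
  then show "g \<in> {g \<in> dual_ball. g x = 1}" using dual_sphere_subset_dual_ball by (auto simp: Dset_def)
next
  fix g assume g: "g \<in> {g \<in> dual_ball. g x = 1}"
  then have "bounded_linear g" "onorm g \<le> 1" by (auto simp: dual_ball_def)
  moreover have "1 \<le> onorm g" using real_le_onorm[OF \<open>bounded_linear g\<close> assms] g by simp
  ultimately show "g \<in> Dset x" using g by (simp add: Dset_def dual_sphere_def)
qed

lemma compact_Dset:
  assumes "norm x \<le> 1"
  shows "compact (Dset x)"
proof -
  have "Dset x = dual_ball \<inter> {g. g x = 1}" using Dset_eq[OF assms] by auto
  moreover have "closed {g :: 'a \<Rightarrow> real. g x = 1}"
    by (intro closed_Collect_eq continuous_on_product_coordinates continuous_on_const)
  ultimately show ?thesis by (simp add: compact_Int_closed compact_dual_ball)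
qed

lemma Dset_nonempty: "norm x = 1 \<Longrightarrow> Dset x \<noteq> {}"
  using dual_ball_norming[of x] by (auto simp: Dset_eq)

lemma dual_ball_near_Dset_subset_open:
  assumes "norm x \<le> 1" "open U" "Dset x \<subseteq> U"
  shows "\<exists>\<delta>>0. \<forall>g\<in>dual_ball. 1 - \<delta> < g x \<longrightarrow> g \<in> U"
proof (cases "dual_ball - U = {}")
  case True
  then show ?thesis by (intro exI[of _ 1]) auto
next
  case False
  have cpt: "compact (dual_ball - U)"
    using compact_Int_closed[OF compact_dual_ball closed_Compl[OF assms(2)]] by (simp add: Diff_eq)
  have cont: "continuous_on (dual_ball - U) (\<lambda>g::'a \<Rightarrow> real. g x)"
    by (rule continuous_on_subset[OF continuous_on_product_coordinates]) simp
  obtain h where h: "h \<in> dual_ball - U" and max: "\<And>g. g \<in> dual_ball - U \<Longrightarrow> g x \<le> h x"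
    using continuous_attains_sup[OF cpt False cont] by blast
  have "h \<notin> Dset x" using h assms(3) by blast
  then have "h x < 1"
    using h assms(1) dual_ball_abs_le[of h x] by (auto simp: Dset_eq[OF assms(1)])
  moreover have "g \<in> U" if "g \<in> dual_ball" "h x < g x" for g
    using max[of g] that by auto
  ultimately show ?thesis by (intro exI[of _ "1 - h x"]) auto
qed

section \<open>From \<open>\<D>\<close>-points to weak* \<open>\<Delta>\<close>-points\<close>

lemma not_weak_star_Delta_point_nhd:
  assumes "f \<in> dual_sphere" "\<not> weak_star_Delta_point f"
  shows "\<exists>V \<eta>. open V \<and> f \<in> V \<and> 0 < \<eta> \<and>
    (\<forall>g\<in>dual_ball. g \<in> V \<longrightarrow> onorm (\<lambda>z. f z - g z) \<le> 2 - \<eta>)"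
proof -
  obtain u \<epsilon> where u: "norm u = 1" "0 < \<epsilon>" "f \<in> weak_star_slice u \<epsilon>"
    and ne: "(SUP g \<in> weak_star_slice u \<epsilon>. onorm (\<lambda>z. f z - g z)) \<noteq> 2"
    using assms unfolding weak_star_Delta_point_def by blast
  define S where "S = (SUP g \<in> weak_star_slice u \<epsilon>. onorm (\<lambda>z. f z - g z))"
  have f: "f \<in> dual_ball" using assms(1) dual_sphere_subset_dual_ball by blast
  have le2: "onorm (\<lambda>z. f z - g z) \<le> 2" if "g \<in> weak_star_slice u \<epsilon>" for g
    using onorm_diff_dual_ball_le[OF f] that by (simp add: weak_star_slice_def)
  then have "S \<le> 2" unfolding S_def using u(3) by (blast intro: cSUP_least)
  with ne have "S < 2" by (simp add: S_def)
  have "onorm (\<lambda>z. f z - g z) \<le> 2 - (2 - S)" if "g \<in> weak_star_slice u \<epsilon>" for g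
    unfolding S_def using le2 that by (auto intro!: cSUP_upper bdd_aboveI2)
  moreover have "open {g :: 'a \<Rightarrow> real. 1 - \<epsilon> < g u}"
    by (intro open_Collect_less continuous_on_const continuous_on_product_coordinates)
  ultimately show ?thesis
    using u \<open>S < 2\<close> by (intro exI[of _ "{g. 1 - \<epsilon> < g u}"] exI[of _ "2 - S"])
      (auto simp: weak_star_slice_def)
qed

lemma Dset_finite_cover_if_no_weak_star_Delta_point:
  fixes x :: "'a::real_normed_vector"
  assumes nx: "norm x = 1" and none: "\<forall>f\<in>Dset x. \<not> weak_star_Delta_point f"
  obtains F \<eta> \<delta> where "finite F" "F \<noteq> {}" "F \<subseteq> Dset x" "0 < \<eta>" "0 < \<delta>"
    "\<And>g. g \<in> dual_ball \<Longrightarrow> 1 - \<delta> < g x \<Longrightarrow> \<exists>f\<in>F. onorm (\<lambda>z. f z - g z) \<le> 2 - \<eta>"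
proof -
  have nhd: "\<forall>f\<in>Dset x. \<exists>V \<eta>. open V \<and> f \<in> V \<and> 0 < \<eta> \<and>
      (\<forall>g\<in>dual_ball. g \<in> V \<longrightarrow> onorm (\<lambda>z. f z - g z) \<le> 2 - \<eta>)"
  proof
    fix f assume "f \<in> Dset x"
    then show "\<exists>V \<eta>. open V \<and> f \<in> V \<and> 0 < \<eta> \<and>
      (\<forall>g\<in>dual_ball. g \<in> V \<longrightarrow> onorm (\<lambda>z. f z - g z) \<le> 2 - \<eta>)"
      using not_weak_star_Delta_point_nhd[of f] none by (simp add: Dset_def)
  qed
  obtain V where "\<forall>f\<in>Dset x. \<exists>\<eta>. open (V f) \<and> f \<in> V f \<and> 0 < \<eta> \<and>
      (\<forall>g\<in>dual_ball. g \<in> V f \<longrightarrow> onorm (\<lambda>z. f z - g z) \<le> 2 - \<eta>)"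
    using bchoice[OF nhd] by blast
  then obtain \<eta> where "\<forall>f\<in>Dset x. open (V f) \<and> f \<in> V f \<and> 0 < \<eta> f \<and>
      (\<forall>g\<in>dual_ball. g \<in> V f \<longrightarrow> onorm (\<lambda>z. f z - g z) \<le> 2 - \<eta> f)"
    by (rule bchoice[THEN exE]) blast
  then have V: "\<And>f. f \<in> Dset x \<Longrightarrow> open (V f)" "\<And>f. f \<in> Dset x \<Longrightarrow> f \<in> V f"
    and \<eta>: "\<And>f. f \<in> Dset x \<Longrightarrow> 0 < \<eta> f"
    and far: "\<And>f g. f \<in> Dset x \<Longrightarrow> g \<in> dual_ball \<Longrightarrow> g \<in> V f \<Longrightarrow> onorm (\<lambda>z. f z - g z) \<le> 2 - \<eta> f"
    by blast+
  obtain F where F: "F \<subseteq> Dset x" "finite F" "Dset x \<subseteq> (\<Union>f\<in>F. V f)"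
  proof (rule compactE_image)
    show "compact (Dset x)" by (rule compact_Dset) (simp add: nx)
    show "Dset x \<subseteq> (\<Union>f\<in>Dset x. V f)" using V(2) by blast
  qed (use V(1) in auto)
  have "F \<noteq> {}" using F(3) Dset_nonempty[OF nx] by blast
  have "open (\<Union>f\<in>F. V f)" using F(1) V(1) by blast
  then obtain \<delta> where "0 < \<delta>" and cover: "\<And>g. g \<in> dual_ball \<Longrightarrow> 1 - \<delta> < g x \<Longrightarrow> \<exists>f\<in>F. g \<in> V f"
    using dual_ball_near_Dset_subset_open[of x "\<Union>f\<in>F. V f"] nx F(3) by auto
  show ?thesis
  proof (rule that[OF F(2) \<open>F \<noteq> {}\<close> F(1) _ \<open>0 < \<delta>\<close>])
    show "0 < Min (\<eta> ` F)" using F \<open>F \<noteq> {}\<close> \<eta> by auto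
    fix g assume "g \<in> dual_ball" "1 - \<delta> < g x"
    then obtain f where "f \<in> F" "g \<in> V f" using cover by blast
    moreover have "Min (\<eta> ` F) \<le> \<eta> f" using F(2) \<open>f \<in> F\<close> by simp
    ultimately have "onorm (\<lambda>z. f z - g z) \<le> 2 - Min (\<eta> ` F)"
      using far[of f g] F(1) \<open>g \<in> dual_ball\<close> by force
    then show "\<exists>f\<in>F. onorm (\<lambda>z. f z - g z) \<le> 2 - Min (\<eta> ` F)" using \<open>f \<in> F\<close> by blast
  qed
qed

lemma D_point_average_witness:
  fixes \<delta> :: real
  assumes x: "D_point x" and F: "finite F" "F \<noteq> {}" "F \<subseteq> Dset x" and "0 < \<delta>"
  obtains y k where "norm y \<le> 1" "k \<in> dual_ball" "1 - \<delta> < k x" "k y < -1 + \<delta>"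
    "\<And>f. f \<in> F \<Longrightarrow> 1 - card F * \<delta> < f y"
proof -
  have nx: "norm x = 1" using x by (simp add: D_point_def)
  have F_ball: "F \<subseteq> dual_ball" "\<And>f. f \<in> F \<Longrightarrow> f x = 1" using F(3) by (auto simp: Dset_eq nx)
  define \<phi> where "\<phi> a = (\<Sum>f\<in>F. f a) / card F" for a
  have "\<phi> \<in> dual_ball" unfolding \<phi>_def using dual_ball_average[OF F(1,2) F_ball(1)] .
  moreover have "\<phi> x = 1"
    using F F_ball(2) sum.cong[of F F "\<lambda>f. f x" "\<lambda>_. 1"] by (simp add: \<phi>_def card_gt_0_iff)
  ultimately have \<phi>: "\<phi> \<in> Dset x" by (simp add: Dset_eq nx)
  have xS: "x \<in> slice \<phi> \<delta>" using nx \<open>\<phi> x = 1\<close> \<open>0 < \<delta>\<close> by (simp add: slice_def)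
  have "norm (x - y) \<le> 2" if "y \<in> slice \<phi> \<delta>" for y
    using norm_triangle_ineq4[of x y] nx that by (simp add: slice_def)
  then have bdd: "bdd_above ((\<lambda>y. norm (x - y)) ` slice \<phi> \<delta>)" by (intro bdd_aboveI2)
  have "2 - \<delta> < (SUP y \<in> slice \<phi> \<delta>. norm (x - y))"
    using x \<phi> \<open>0 < \<delta>\<close> by (simp add: D_point_def)
  then obtain y where y: "norm y \<le> 1" "1 - \<delta> < \<phi> y" "2 - \<delta> < norm (x - y)"
    using less_cSUP_iff[OF _ bdd] xS by (auto simp: slice_def)
  obtain k where k: "k \<in> dual_ball" "k (x - y) = norm (x - y)" using dual_ball_norming by blast
  have "k (x - y) = k x - k y" using k(1) by (simp add: dual_ball_iff linear_diff)
  with k y(1,3) nx dual_ball_abs_le[OF k(1), of x] dual_ball_abs_le[OF k(1), of y]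
  have "1 - \<delta> < k x" "k y < -1 + \<delta>" by linarith+
  moreover have "1 - card F * \<delta> < f y" if "f \<in> F" for f
  proof (rule mean_gt_imp_each_gt[OF F(1) that])
    show "g y \<le> 1" if "g \<in> F" for g using F_ball(1) that dual_ball_abs_le[of g y] y(1) by force
    show "1 - \<delta> < (\<Sum>g\<in>F. g y) / card F" using y(2) by (simp add: \<phi>_def)
  qed
  ultimately show ?thesis using that y(1) k(1) by blast
qed

lemma D_point_imp_weak_star_Delta_point:
  fixes x :: "'a::real_normed_vector"
  assumes x: "D_point x"
  shows "\<exists>f::'a \<Rightarrow> real. weak_star_Delta_point f"
proof (rule ccontr)
  assume "\<nexists>f::'a \<Rightarrow> real. weak_star_Delta_point f"
  then have none: "\<forall>f\<in>Dset x. \<not> weak_star_Delta_point f" by blast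
  have nx: "norm x = 1" using x by (simp add: D_point_def)
  obtain F \<eta> \<delta>\<^sub>0 where F: "finite F" "F \<noteq> {}" "F \<subseteq> Dset x" and "0 < \<eta>" "0 < \<delta>\<^sub>0"
    and cover: "\<And>g. g \<in> dual_ball \<Longrightarrow> 1 - \<delta>\<^sub>0 < g x \<Longrightarrow> \<exists>f\<in>F. onorm (\<lambda>z. f z - g z) \<le> 2 - \<eta>"
    using Dset_finite_cover_if_no_weak_star_Delta_point[OF nx none] by blast
  define \<delta> where "\<delta> = min \<delta>\<^sub>0 (\<eta> / (card F + 1))"
  have "0 < \<delta>" using \<open>0 < \<delta>\<^sub>0\<close> \<open>0 < \<eta>\<close> by (simp add: \<delta>_def)
  have "(card F + 1) * \<delta> \<le> \<eta>" unfolding \<delta>_def by (simp add: min_mult_distrib_left)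
  obtain y k where y: "norm y \<le> 1" and k: "k \<in> dual_ball" "1 - \<delta> < k x" "k y < -1 + \<delta>"
    and Fy: "\<And>f. f \<in> F \<Longrightarrow> 1 - card F * \<delta> < f y"
    using D_point_average_witness[OF x F \<open>0 < \<delta>\<close>] by blast
  obtain j where j: "j \<in> F" "onorm (\<lambda>z. j z - k z) \<le> 2 - \<eta>"
    using cover[OF k(1)] k(2) by (force simp: \<delta>_def)
  have "j y - k y \<le> onorm (\<lambda>z. j z - k z)"
    using F(3) j(1) k(1) y by (intro dual_ball_diff_le_onorm) (auto simp: Dset_eq nx)
  then show False
    using j(2) Fy[OF j(1)] k(3) \<open>(card F + 1) * \<delta> \<le> \<eta>\<close> by (simp add: algebra_simps)
qed

section \<open>From weak* \<open>\<Delta>\<close>-points to weak* sequential super \<open>\<Delta>\<close>-points\<close>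

lemma weak_star_Delta_point_witness:
  fixes f :: "'a::real_normed_vector \<Rightarrow> real"
  assumes f: "weak_star_Delta_point f" and "w \<noteq> 0" "0 < \<epsilon>" "0 < \<delta>"
  obtains g z where "g \<in> dual_ball" "f w - \<epsilon> * norm w < g w"
    "norm z \<le> 1" "1 - \<delta> < f z" "g z < -1 + \<delta>"
proof -
  have fb: "f \<in> dual_ball"
    using f dual_sphere_subset_dual_ball by (auto simp: weak_star_Delta_point_def)
  define u where "u = w /\<^sub>R norm w"
  have u: "norm u = 1" using \<open>w \<noteq> 0\<close> by (simp add: u_def)
  \<comment> \<open>the slice of width \<open>\<eta>\<close> in direction \<open>u\<close> contains \<open>f\<close>, and its members exceed \<open>f u - \<epsilon>\<close> at \<open>u\<close>\<close>
  define \<eta> where "\<eta> = 1 - f u + \<epsilon>"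
  have "f u \<le> 1" using dual_ball_abs_le[OF fb, of u] u by simp
  then have "0 < \<eta>" and fS: "f \<in> weak_star_slice u \<eta>"
    using fb \<open>0 < \<epsilon>\<close> by (auto simp: \<eta>_def weak_star_slice_def)
  then have "2 - \<delta> < (SUP g \<in> weak_star_slice u \<eta>. onorm (\<lambda>z. f z - g z))"
    using f u \<open>0 < \<delta>\<close> by (simp add: weak_star_Delta_point_def)
  moreover have bdd: "bdd_above ((\<lambda>g. onorm (\<lambda>z. f z - g z)) ` weak_star_slice u \<eta>)"
    using onorm_diff_dual_ball_le[OF fb] by (intro bdd_aboveI2) (auto simp: weak_star_slice_def)
  ultimately obtain g where "g \<in> weak_star_slice u \<eta>" "2 - \<delta> < onorm (\<lambda>z. f z - g z)"
    using less_cSUP_iff[OF _ bdd] fS by blast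
  then have g: "g \<in> dual_ball" "f u - \<epsilon> < g u" "2 - \<delta> < onorm (\<lambda>z. f z - g z)"
    by (auto simp: weak_star_slice_def \<eta>_def)
  obtain z where z: "norm z \<le> 1" "2 - \<delta> < f z - g z"
    using less_onormE[OF bounded_linear_sub g(3)] fb g(1) by (auto simp: dual_ball_def)
  have "\<bar>f z\<bar> \<le> 1" "\<bar>g z\<bar> \<le> 1"
    using dual_ball_abs_le[OF fb, of z] dual_ball_abs_le[OF g(1), of z] z(1) by simp_all
  with z have "1 - \<delta> < f z" "g z < -1 + \<delta>" by linarith+
  moreover have "f w - \<epsilon> * norm w < g w"
  proof -
    have w: "w = norm w *\<^sub>R u" using \<open>w \<noteq> 0\<close> by (simp add: u_def)
    have "norm w * (f u - \<epsilon>) < norm w * g u" using g(2) \<open>w \<noteq> 0\<close> by simp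
    moreover have "f w = norm w * f u" "g w = norm w * g u"
      using w fb g(1) linear_scale[of f] linear_scale[of g] by (metis dual_ball_iff real_scaleR_def)+
    ultimately show ?thesis by (simp add: algebra_simps)
  qed
  ultimately show ?thesis using that g(1) z(1) by blast
qed

lemma dual_ball_dyadic_sum_lower_bound:
  assumes g: "g \<in> dual_ball" and e: "norm e \<le> 1" and z: "\<And>j. norm (z j) \<le> 1"
    and large: "2^n - 2 < g (e + (\<Sum>j<n. 2^j *\<^sub>R z j))" and "i < n"
  shows "1 - 2 / 2^i < g (z i)"
proof -
  have lin: "linear g" using g by (simp add: dual_ball_iff)
  have le1: "g a \<le> 1" if "norm a \<le> 1" for a using dual_ball_abs_le[OF g, of a] that by simp
  have i: "i \<in> {..<n}" using \<open>i < n\<close> by simp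
  have "g (e + (\<Sum>j<n. 2^j *\<^sub>R z j)) = g e + 2^i * g (z i) + (\<Sum>j\<in>{..<n} - {i}. 2^j * g (z j))"
    using sum.remove[OF finite_lessThan i, of "\<lambda>j. 2^j * g (z j)"]
    by (simp add: linear_add[OF lin] linear_sum[OF lin] linear_scale[OF lin])
  also have "\<dots> \<le> 1 + 2^i * g (z i) + (\<Sum>j\<in>{..<n} - {i}. 2^j)"
    using le1[OF e] le1[OF z] by (intro add_mono sum_mono) (auto intro: mult_left_le)
  also have "(\<Sum>j\<in>{..<n} - {i}. (2::real)^j) = 2^n - 1 - 2^i"
    using sum.remove[OF finite_lessThan i, of "\<lambda>j. (2::real)^j"] sum_gp_strict[of "2::real" n] by simp
  finally have "2^i * (1 - g (z i)) < 2" using large by (simp add: algebra_simps)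
  then show ?thesis by (simp add: field_simps)
qed

text \<open>Since \<open>2\<^sup>n - 2 + 1 / 2\<^sup>n = (2\<^sup>n - 1)\<^sup>2 / 2\<^sup>n \<ge> 0\<close>, the invariant on \<open>f W\<close> forces \<open>W \<noteq> 0\<close>;
  it survives the step because \<open>f z > 1 - 1 / (2 * 4\<^sup>n)\<close> loses exactly \<open>1 / 2\<^sup>n\<^sup>+\<^sup>1\<close>.\<close>

lemma weak_star_Delta_point_dyadic_step:
  fixes f :: "'a::real_normed_vector \<Rightarrow> real"
  assumes f: "weak_star_Delta_point f" and W: "2^n - 2 + 1 / 2^n < f W" "norm W \<le> 2^n"
  obtains g z where "g \<in> dual_ball" "2^n - 2 < g W" "norm z \<le> 1" "g z < -1 + 1 / 4^n"
    "2^Suc n - 2 + 1 / 2^Suc n < f (W + 2^n *\<^sub>R z)" "norm (W + 2^n *\<^sub>R z) \<le> 2^Suc n"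
proof -
  have lin: "linear f"
    using f by (auto simp: weak_star_Delta_point_def dual_sphere_def bounded_linear.linear)
  have four: "(4::real)^n = 2^n * 2^n" using power_mult_distrib[of "2::real" 2 n] by simp
  have "0 \<le> ((2::real)^n - 1)^2 / 2^n" by simp
  also have "\<dots> = 2^n - 2 + 1 / 2^n" by (simp add: field_simps power2_eq_square)
  finally have "W \<noteq> 0" using W(1) linear_0[OF lin] by auto
  then obtain g z where g: "g \<in> dual_ball" "f W - 1 / 4^n * norm W < g W"
    and z: "norm z \<le> 1" "1 - 1 / (2 * 4^n) < f z" "g z < -1 + 1 / (2 * 4^n)"
    using weak_star_Delta_point_witness[OF f, of W "1 / 4^n" "1 / (2 * 4^n)"] by auto
  have "1 / 4^n * norm W \<le> 1 / 4^n * (2::real)^n" using W(2) by (simp add: divide_right_mono)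
  also have "\<dots> = 1 / 2^n" by (simp add: four)
  finally have "2^n - 2 < g W" using g(2) W(1) by linarith
  moreover have "g z < -1 + 1 / 4^n"
    using z(3) divide_left_mono[of "(4::real)^n" "2 * 4^n" 1] by simp
  moreover have "2^n * (1 - 1 / (2 * 4^n)) = (2::real)^n - 1 / (2 * 2^n)" by (simp add: four field_simps)
  then have "2^n - 1 / (2 * 2^n) < (2::real)^n * f z"
    using mult_strict_left_mono[OF z(2), of "2^n"] by simp
  moreover have "(1::real) / 2^n - 1 / (2 * 2^n) = 1 / 2^Suc n" "(2::real)^Suc n = 2^n + 2^n"
    by simp_all
  ultimately have "2^Suc n - 2 + 1 / 2^Suc n < f W + 2^n * f z" using W(1) by linarith
  moreover have "norm (W + 2^n *\<^sub>R z) \<le> 2^Suc n"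
  proof -
    have "(2::real)^n * norm z \<le> 2^n" using z(1) by (simp add: mult_left_le)
    moreover have "norm (W + 2^n *\<^sub>R z) \<le> norm W + 2^n * norm z"
      using norm_triangle_ineq[of W "2^n *\<^sub>R z"] by simp
    moreover have "(2::real)^Suc n = 2^n + 2^n" by simp
    ultimately show ?thesis using W(2) by linarith
  qed
  ultimately show ?thesis
    using that g(1) z(1) \<open>2^n - 2 < g W\<close> \<open>g z < -1 + 1 / 4^n\<close>
    by (simp add: linear_add[OF lin] linear_scale[OF lin])
qed

lemma weak_star_Delta_point_dyadic_sequences:
  fixes f :: "'a::real_normed_vector \<Rightarrow> real"
  assumes f: "weak_star_Delta_point f"
  obtains e :: 'a and g :: "nat \<Rightarrow> 'a \<Rightarrow> real" and z :: "nat \<Rightarrow> 'a"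
  where "norm e \<le> 1" "\<And>n. g n \<in> dual_ball" "\<And>n. norm (z n) \<le> 1"
    "\<And>n. g n (z n) < -1 + 1 / 4^n" "\<And>n. 2^n - 2 < g n (e + (\<Sum>j<n. 2^j *\<^sub>R z j))"
proof -
  define good where "good n W \<longleftrightarrow> 2^n - 2 + 1 / 2^n < f W \<and> norm W \<le> (2::real)^n" for n W
  define P where "P n W g z \<longleftrightarrow> good n W \<and> g \<in> dual_ball \<and> 2^n - 2 < g W \<and>
    norm z \<le> 1 \<and> g z < -1 + 1 / 4^n \<and> good (Suc n) (W + 2^n *\<^sub>R z)"
    for n W and g :: "'a \<Rightarrow> real" and z
  have step: "\<exists>g z. P n W g z" if "good n W" for n W
  proof -
    have W: "2^n - 2 + 1 / 2^n < f W" "norm W \<le> 2^n" using that by (simp_all add: good_def)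
    obtain g z where "g \<in> dual_ball" "2^n - 2 < g W" "norm z \<le> 1" "g z < -1 + 1 / 4^n"
      "2^Suc n - 2 + 1 / 2^Suc n < f (W + 2^n *\<^sub>R z)" "norm (W + 2^n *\<^sub>R z) \<le> 2^Suc n"
      using weak_star_Delta_point_dyadic_step[OF f W] by blast
    then show ?thesis using that by (auto simp: P_def good_def)
  qed
  have "bounded_linear f" "onorm f = 1"
    using f by (auto simp: weak_star_Delta_point_def dual_sphere_def)
  then obtain e where "norm e \<le> 1" "0 < f e" using less_onormE[of f 0] by auto
  then have "good 0 e" by (simp add: good_def)
  have "\<exists>q. \<forall>n. P n (fst (q n)) (fst (snd (q n))) (snd (snd (q n))) \<and>
      fst (q (Suc n)) = fst (q n) + 2^n *\<^sub>R snd (snd (q n))"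
  proof (rule dependent_nat_choice)
    show "\<exists>q. P 0 (fst q) (fst (snd q)) (snd (snd q))" using step[OF \<open>good 0 e\<close>] by auto
    fix q n assume "P n (fst q) (fst (snd q)) (snd (snd q))"
    then have "good (Suc n) (fst q + 2^n *\<^sub>R snd (snd q))" by (simp add: P_def)
    then obtain g z where "P (Suc n) (fst q + 2^n *\<^sub>R snd (snd q)) g z" using step by blast
    then show "\<exists>q'. P (Suc n) (fst q') (fst (snd q')) (snd (snd q')) \<and>
        fst q' = fst q + 2^n *\<^sub>R snd (snd q)"
      by (intro exI[of _ "(fst q + 2^n *\<^sub>R snd (snd q), g, z)"]) simp
  qed
  then obtain q where q: "\<forall>n. P n (fst (q n)) (fst (snd (q n))) (snd (snd (q n))) \<and>
      fst (q (Suc n)) = fst (q n) + 2^n *\<^sub>R snd (snd (q n))" by blast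
  define W where "W n = fst (q n)" for n
  define g where "g n = fst (snd (q n))" for n
  define z where "z n = snd (snd (q n))" for n
  have P: "P n (W n) (g n) (z n)" and W_Suc: "W (Suc n) = W n + 2^n *\<^sub>R z n" for n
    using q by (simp_all add: W_def g_def z_def)
  have W_sum: "W n = W 0 + (\<Sum>j<n. 2^j *\<^sub>R z j)" for n by (induction n) (simp_all add: W_Suc)
  show ?thesis
  proof (rule that[of "W 0" g z])
    show "norm (W 0) \<le> 1" using P[of 0] by (simp add: P_def good_def)
    show "g n \<in> dual_ball" "norm (z n) \<le> 1" "g n (z n) < -1 + 1 / 4^n" for n
      using P[of n] by (simp_all add: P_def)
    show "2^n - 2 < g n (W 0 + (\<Sum>j<n. 2^j *\<^sub>R z j))" for n
      using P[of n] W_sum[of n] by (simp add: P_def)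
  qed
qed

lemma dual_ball_normalize:
  assumes g: "g \<in> dual_ball" "g \<noteq> (\<lambda>_. 0)"
  shows "(\<lambda>z. g z / onorm g) \<in> dual_sphere" "onorm (\<lambda>z. g z / onorm g - g z) = 1 - onorm g"
proof -
  have lin: "bounded_linear g" and "onorm g \<le> 1" using g(1) by (auto simp: dual_ball_def)
  have "0 < onorm g" using g(2) onorm_pos_lt[OF lin] by (auto simp: fun_eq_iff)
  have "onorm (\<lambda>z. g z / onorm g) = 1"
    using onorm_scaleR[OF lin, of "1 / onorm g"] \<open>0 < onorm g\<close> by simp
  moreover have "bounded_linear (\<lambda>z. g z / onorm g)"
    by (rule bounded_linear_compose[OF bounded_linear_divide lin])
  ultimately show "(\<lambda>z. g z / onorm g) \<in> dual_sphere" by (simp add: dual_sphere_def)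
  have "(\<lambda>z. g z / onorm g - g z) = (\<lambda>z. (1 / onorm g - 1) *\<^sub>R g z)"
    by (simp add: fun_eq_iff algebra_simps)
  moreover have "onorm (\<lambda>z. (1 / onorm g - 1) *\<^sub>R g z) = \<bar>1 / onorm g - 1\<bar> * onorm g"
    by (rule onorm_scaleR[OF lin])
  moreover have "\<bar>1 / onorm g - 1\<bar> * onorm g = 1 - onorm g"
    using \<open>0 < onorm g\<close> \<open>onorm g \<le> 1\<close> by (simp add: field_simps)
  ultimately show "onorm (\<lambda>z. g z / onorm g - g z) = 1 - onorm g" by simp
qed

lemma weak_star_seq_super_Delta_pointI:
  assumes f: "f \<in> dual_sphere" and g: "\<And>n. g n \<in> dual_ball" "\<And>n. g n \<noteq> (\<lambda>_. 0)"
    and lim: "weak_star_tendsto g f" and dist: "(\<lambda>n. onorm (\<lambda>z. f z - g n z)) \<longlonglongrightarrow> 2"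
  shows "weak_star_seq_super_Delta_point f"
proof -
  define c where "c n = onorm (g n)" for n
  define k where "k n = (\<lambda>z. g n z / c n)" for n
  have f_lin: "bounded_linear f" "onorm f = 1" using f by (auto simp: dual_sphere_def)
  have g_lin: "bounded_linear (g n)" and "c n \<le> 1" for n using g(1) by (auto simp: dual_ball_def c_def)
  have k: "k n \<in> dual_sphere" and kg: "onorm (\<lambda>z. k n z - g n z) = 1 - c n" for n
    using dual_ball_normalize[OF g(1,2)] by (simp_all add: k_def c_def)
  have "onorm (\<lambda>z. f z - g n z) \<le> 1 + c n" for n
    using onorm_triangle[OF f_lin(1) bounded_linear_minus[OF g_lin[of n]]] onorm_neg[of "g n"] f_lin(2)
    by (simp add: c_def)
  then have "c \<longlonglongrightarrow> 1"
    using \<open>\<And>n. c n \<le> 1\<close> tendsto_diff[OF dist tendsto_const[of 1]]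
    by (intro tendsto_sandwich[of "\<lambda>n. onorm (\<lambda>z. f z - g n z) - 1" c sequentially "\<lambda>_. 1"])
      (simp_all add: always_eventually algebra_simps)
  then have "weak_star_tendsto k f"
    using lim tendsto_divide[OF _ \<open>c \<longlonglongrightarrow> 1\<close>] by (simp add: weak_star_tendsto_def k_def)
  moreover have "(\<lambda>n. onorm (\<lambda>z. f z - k n z)) \<longlonglongrightarrow> 2"
  proof (rule tendsto_sandwich[of "\<lambda>n. onorm (\<lambda>z. f z - g n z) - (1 - c n)" _ _ "\<lambda>_. 2"])
    have k_lin: "bounded_linear (k n)" for n using k by (simp add: dual_sphere_def)
    have "onorm (\<lambda>z. f z - g n z) \<le> onorm (\<lambda>z. f z - k n z) + onorm (\<lambda>z. k n z - g n z)" for n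
      using onorm_triangle[OF bounded_linear_sub[OF f_lin(1) k_lin[of n]]
          bounded_linear_sub[OF k_lin[of n] g_lin[of n]]]
      by simp
    then show "\<forall>\<^sub>F n in sequentially. onorm (\<lambda>z. f z - g n z) - (1 - c n) \<le> onorm (\<lambda>z. f z - k n z)"
      using kg by (simp add: always_eventually algebra_simps)
    show "\<forall>\<^sub>F n in sequentially. onorm (\<lambda>z. f z - k n z) \<le> 2"
      using onorm_diff_dual_ball_le f k dual_sphere_subset_dual_ball by (blast intro: always_eventually)
    show "(\<lambda>n. onorm (\<lambda>z. f z - g n z) - (1 - c n)) \<longlonglongrightarrow> 2"
      using tendsto_diff[OF dist tendsto_diff[OF tendsto_const[of 1] \<open>c \<longlonglongrightarrow> 1\<close>]] by simp
  qed simp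
  ultimately show ?thesis using f k unfolding weak_star_seq_super_Delta_point_def by blast
qed

lemma dual_ball_almost_norming_imp_sphere:
  assumes H: "H \<in> dual_ball" and z: "\<And>i. norm (z i) \<le> 1"
    and a: "a \<longlonglongrightarrow> 1" "\<And>i. a i \<le> H (z i)"
  shows "H \<in> dual_sphere"
proof -
  have lin: "bounded_linear H" and "onorm H \<le> 1" using H by (auto simp: dual_ball_def)
  have "a i \<le> onorm H" for i using a(2)[of i] real_le_onorm[OF lin z[of i]] by linarith
  then have "1 \<le> onorm H" using LIMSEQ_le_const2[OF a(1)] by blast
  with lin \<open>onorm H \<le> 1\<close> show ?thesis by (simp add: dual_sphere_def)
qed

lemma weak_star_tendsto_subseq_ge:
  fixes r :: "nat \<Rightarrow> nat"
  assumes r: "strict_mono r" and lim: "weak_star_tendsto (g \<circ> r) h"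
    and ge: "\<And>n. i < n \<Longrightarrow> a \<le> g n x"
  shows "a \<le> h x"
proof (rule LIMSEQ_le_const)
  show "(\<lambda>n. g (r n) x) \<longlonglongrightarrow> h x" using lim by (simp add: weak_star_tendsto_def)
  show "\<exists>N. \<forall>n\<ge>N. a \<le> g (r n) x"
    using ge seq_suble[OF r] by (intro exI[of _ "Suc i"]) (meson Suc_le_lessD order_less_le_trans)
qed

lemma weak_star_Delta_point_imp_seq_super_Delta_point:
  fixes f :: "'a::real_normed_vector \<Rightarrow> real"
  assumes comp: "dual_ball_weak_star_seq_compact TYPE('a)" and f: "weak_star_Delta_point f"
  shows "\<exists>h::'a \<Rightarrow> real. weak_star_seq_super_Delta_point h"
proof -
  obtain e :: 'a and g z where e: "norm e \<le> 1" and g: "\<And>n. g n \<in> dual_ball"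
    and z: "\<And>n. norm (z n) \<le> 1" and gz: "\<And>n. g n (z n) < -1 + 1 / 4^n"
    and large: "\<And>n. 2^n - 2 < g n (e + (\<Sum>j<n. 2^j *\<^sub>R z j))"
    using weak_star_Delta_point_dyadic_sequences[OF f] by blast
  obtain r H where r: "strict_mono r" and H: "H \<in> dual_ball" and lim: "weak_star_tendsto (g \<circ> r) H"
    using comp g unfolding dual_ball_weak_star_seq_compact_def by blast
  have Hz: "1 - 2 / 2^i \<le> H (z i)" for i
  proof (rule weak_star_tendsto_subseq_ge[OF r lim])
    show "1 - 2 / 2^i \<le> g n (z i)" if "i < n" for n
      using dual_ball_dyadic_sum_lower_bound[OF g e z large that] by simp
  qed
  have "(\<lambda>i. 1 - 2 / 2^i) \<longlonglongrightarrow> (1::real)"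
    using tendsto_diff[OF tendsto_const LIMSEQ_divide_realpow_zero[of 2 2]] by simp
  then have H_sphere: "H \<in> dual_sphere" by (rule dual_ball_almost_norming_imp_sphere[OF H z _ Hz])
  have "g (r n) \<noteq> (\<lambda>_. 0)" for n
  proof -
    have "(1::real) / 4^r n \<le> 1" by simp
    then have "g (r n) (z (r n)) < 0" using gz[of "r n"] by linarith
    then show ?thesis by auto
  qed
  moreover have "(\<lambda>n. onorm (\<lambda>x. H x - g (r n) x)) \<longlonglongrightarrow> 2"
  proof (rule tendsto_sandwich[of "\<lambda>n. 2 - 2 / 2^r n - 1 / 4^r n" _ _ "\<lambda>_. 2"])
    have "2 - 2 / 2^m - 1 / 4^m \<le> onorm (\<lambda>x. H x - g m x)" for m
    proof -
      have "H (z m) - g m (z m) \<le> onorm (\<lambda>x. H x - g m x)"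
        by (rule dual_ball_diff_le_onorm[OF H g z])
      then show ?thesis using Hz[of m] gz[of m] by linarith
    qed
    then show "\<forall>\<^sub>F n in sequentially. 2 - 2 / 2^r n - 1 / 4^r n \<le> onorm (\<lambda>x. H x - g (r n) x)"
      by (simp add: always_eventually)
    show "\<forall>\<^sub>F n in sequentially. onorm (\<lambda>x. H x - g (r n) x) \<le> 2"
      using onorm_diff_dual_ball_le[OF H g] by (simp add: always_eventually)
    have "(\<lambda>m. 2 - 2 / 2^m - 1 / 4^m) \<longlonglongrightarrow> (2::real)"
      using tendsto_diff[OF tendsto_diff[OF tendsto_const LIMSEQ_divide_realpow_zero[of 2 2]]
          LIMSEQ_divide_realpow_zero[of 4 1]] by simp
    from LIMSEQ_subseq_LIMSEQ[OF this r]
    show "(\<lambda>n. 2 - 2 / 2^r n - 1 / 4^r n :: real) \<longlonglongrightarrow> 2" by (simp add: comp_def)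
  qed simp
  ultimately have "weak_star_seq_super_Delta_point H"
    using weak_star_seq_super_Delta_pointI[OF H_sphere, of "g \<circ> r"] g lim by simp
  then show ?thesis by blast
qed

theorem theorem5p22:
  assumes "dual_ball_weak_star_seq_compact TYPE('a::banach)"
    and "(\<exists>x::'a. D_point x) \<or> (\<exists>f::'a \<Rightarrow> real. weak_star_Delta_point f)"
  shows "\<exists>f::'a \<Rightarrow> real. weak_star_seq_super_Delta_point f"
proof -
  obtain f :: "'a \<Rightarrow> real" where "weak_star_Delta_point f"
    using assms(2) D_point_imp_weak_star_Delta_point by blast
  then show ?thesis by (rule weak_star_Delta_point_imp_seq_super_Delta_point[OF assms(1)])
qed

end
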